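(* Let $n\ge 2$, $N=2^n$, let $a_1,\dots,a_{N-1}$ be scalars, and for $1\le k\le N-1$ define \[ M_k = a_k \sum_{i=0}^{N-1-k} \big(\ket{i}\bra{i+k} + \ket{i+k}\bra{i}\big). \] Fix an integer $j$ with $1\le j<n$ and let $C_j=\{k : 1\le k<2^n,\ k\equiv 2^{j-1} \pmod{2^j}\}$. If $a_k=a_{2^{j-1}}$ for all $k\in C_j$, then \[ \sum_{k\in C_j} M_k = a_{2^{j-1}} \sum_{k\in C_j} X^{b_n(k)}\otimes X^{b_{n-1}(k)}\otimes\cdots\otimes X^{b_1(k)}, \] where $k=\sum_{i=1}^n b_i(k)2^{i-1}$ with $b_i(k)\in\{0,1\}$ is the $n$-bit binary representation of $k$, $X$ is the Pauli $X$ matrix, and $X^0=I$.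
   Context: Computational basis states $\ket{i}$, $i\in\{0,\dots,N-1\}$, of $n$ qubits are identified with $\ket{i_n i_{n-1}\cdots i_1}$ where $i=\sum_{l=1}^n i_l 2^{l-1}$, the leftmost tensor factor corresponding to the most significant bit. The matrices $M_k$ are the diagonal components of the $N\times N$ symmetric Toeplitz matrix with entries $a_{|i-j|}$. *)

theory Defs
  imports "Jordan_Normal_Form.Matrix"
begin

definition ketbra :: "nat \<Rightarrow> nat \<Rightarrow> nat \<Rightarrow> complex mat" where
  "ketbra N i j = mat N N (\<lambda>(r, c). if r = i \<and> c = j then 1 else 0)"

definition msum :: "nat \<Rightarrow> ('b \<Rightarrow> complex mat) \<Rightarrow> 'b set \<Rightarrow> complex mat" where
  "msum N f S = mat N N (\<lambda>(r, c). \<Sum>k\<in>S. f k $$ (r, c))"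

definition Mk :: "nat \<Rightarrow> (nat \<Rightarrow> complex) \<Rightarrow> nat \<Rightarrow> complex mat" where
  "Mk N a k = a k \<cdot>\<^sub>m msum N (\<lambda>i. ketbra N i (i + k) + ketbra N (i + k) i) {0..N - 1 - k}"

definition kron :: "complex mat \<Rightarrow> complex mat \<Rightarrow> complex mat" where
  "kron A B = mat (dim_row A * dim_row B) (dim_col A * dim_col B)
     (\<lambda>(i, j). A $$ (i div dim_row B, j div dim_col B) * B $$ (i mod dim_row B, j mod dim_col B))"

definition pauli_X :: "complex mat" where
  "pauli_X = mat_of_rows_list 2 [[0, 1], [1, 0]]"

text \<open>i-th binary digit b_i(k) (i \<ge> 1), so k = sum_i b_i(k) 2^(i-1).\<close>
definition bdig :: "nat \<Rightarrow> nat \<Rightarrow> nat" where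
  "bdig i k = (k div 2 ^ (i - 1)) mod 2"

fun xstring :: "nat \<Rightarrow> nat \<Rightarrow> complex mat" where
  "xstring k 0 = 1\<^sub>m 1"
| "xstring k (Suc m) = kron (pauli_X ^\<^sub>m bdig (Suc m) k) (xstring k m)"

end

theory Submission
  imports Defs
begin

text \<open>Entrywise, the Pauli string of k has a 1 at (r, c) exactly when k = r XOR c, and M_k has
  a_k at (r, c) exactly when k = |r - c|. Membership in C_j says that the lowest set bit of k is
  bit j - 1. Now |r - c| and r XOR c have the same lowest set bit, namely the lowest bit in which
  r and c differ: subtracting numbers that agree below bit j - 1 causes no borrow into that bit.
  So both sides have the entry a_(2^(j-1)) at (r, c) if r and c first differ at bit j - 1, and 0
  otherwise.\<close>

unbundle bit_operations_syntax

lemma pauli_X_carrier: "pauli_X \<in> carrier_mat 2 2"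
proof -
  have "length [[0::complex, 1], [1, 0]] = 2" by simp
  then show ?thesis unfolding pauli_X_def mat_of_rows_list_def by (simp only: mat_carrier)
qed

lemma pauli_X_power_carrier: "pauli_X ^\<^sub>m b \<in> carrier_mat 2 2"
  using pauli_X_carrier by (rule pow_carrier_mat)

lemma pauli_X_index: "p < 2 \<Longrightarrow> q < 2 \<Longrightarrow> pauli_X $$ (p, q) = (if p = q then 0 else 1)"
  by (auto simp: pauli_X_def mat_of_rows_list_def less_2_cases_iff)

lemma pauli_X_power_index:
  assumes "p < 2" "q < 2"
  shows "(pauli_X ^\<^sub>m b) $$ (p, q) = (if (p \<noteq> q) = odd b then 1 else 0)"
  using assms(2)
proof (induction b arbitrary: q)
  case 0
  have "dim_row pauli_X = 2" using pauli_X_carrier by simp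
  then show ?case using assms(1) 0 by simp
next
  case (Suc b)
  have "(pauli_X ^\<^sub>m Suc b) $$ (p, q) = (\<Sum>i<2. (pauli_X ^\<^sub>m b) $$ (p, i) * pauli_X $$ (i, q))"
    using pauli_X_power_carrier[of b] pauli_X_carrier assms(1) Suc.prems
    by (simp add: scalar_prod_def atLeast0LessThan)
  also have "\<dots> = (pauli_X ^\<^sub>m b) $$ (p, 1 - q)"
    using Suc.prems by (auto simp: numeral_2_eq_2 pauli_X_index less_Suc_eq)
  also have "\<dots> = (if (p \<noteq> q) = odd (Suc b) then 1 else 0)"
    using Suc.IH[of "1 - q"] Suc.prems assms(1) by (auto simp: less_2_cases_iff)
  finally show ?case .
qed

lemma dim_kron [simp]:
  "dim_row (kron A B) = dim_row A * dim_row B"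
  "dim_col (kron A B) = dim_col A * dim_col B"
  by (simp_all add: kron_def)

lemma index_kron:
  "r < dim_row A * dim_row B \<Longrightarrow> c < dim_col A * dim_col B \<Longrightarrow>
   kron A B $$ (r, c) = A $$ (r div dim_row B, c div dim_col B) * B $$ (r mod dim_row B, c mod dim_col B)"
  by (simp add: kron_def)

lemma xstring_carrier: "xstring k m \<in> carrier_mat (2 ^ m) (2 ^ m)"
proof (induction m)
  case (Suc m)
  have "dim_row (pauli_X ^\<^sub>m b) = 2" "dim_col (pauli_X ^\<^sub>m b) = 2" for b
    using carrier_matD[OF pauli_X_power_carrier] by auto
  with Suc show ?case unfolding carrier_mat_def xstring.simps dim_kron by simp
qed simp

lemma xstring_index_bits:
  assumes "r < 2 ^ m" "c < 2 ^ m"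
  shows "xstring k m $$ (r, c) = (if \<forall>i<m. bit k i = (bit r i \<noteq> bit c i) then 1 else 0)"
  using assms
proof (induction m arbitrary: r c)
  case (Suc m)
  have dim_X: "dim_row (pauli_X ^\<^sub>m b) = 2" "dim_col (pauli_X ^\<^sub>m b) = 2" for b
    using carrier_matD[OF pauli_X_power_carrier] by auto
  have dim_xstring: "dim_row (xstring k m) = 2 ^ m" "dim_col (xstring k m) = 2 ^ m"
    using xstring_carrier by auto
  have high: "r div 2 ^ m < 2" "c div 2 ^ m < 2"
    using Suc.prems by (auto simp: less_mult_imp_div_less)
  have "xstring k (Suc m) $$ (r, c)
      = (pauli_X ^\<^sub>m bdig (Suc m) k) $$ (r div 2 ^ m, c div 2 ^ m)
        * xstring k m $$ (r mod 2 ^ m, c mod 2 ^ m)"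
    using Suc.prems index_kron[of r "pauli_X ^\<^sub>m bdig (Suc m) k" "xstring k m" c]
    unfolding dim_X dim_xstring by simp
  also have "(pauli_X ^\<^sub>m bdig (Suc m) k) $$ (r div 2 ^ m, c div 2 ^ m)
      = (if bit k m = (bit r m \<noteq> bit c m) then 1 else 0)"
    using high by (auto simp: pauli_X_power_index bdig_def bit_iff_odd less_2_cases_iff)
  also have "xstring k m $$ (r mod 2 ^ m, c mod 2 ^ m)
      = (if \<forall>i<m. bit k i = (bit r i \<noteq> bit c i) then 1 else 0)"
  proof -
    have "bit (v mod 2 ^ m) i = bit v i" if "i < m" for v :: nat and i
      using that by (simp flip: take_bit_eq_mod add: bit_take_bit_iff)
    then show ?thesis using Suc.IH[of "r mod 2 ^ m" "c mod 2 ^ m"] by simp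
  qed
  finally show ?case by (auto simp: less_Suc_eq)
qed simp

lemma xor_less_two_power: "(r::nat) < 2 ^ n \<Longrightarrow> c < 2 ^ n \<Longrightarrow> r XOR c < 2 ^ n"
  by (metis take_bit_nat_eq_self_iff take_bit_xor)

lemma xstring_index:
  assumes "r < 2 ^ m" "c < 2 ^ m" "k < 2 ^ m"
  shows "xstring k m $$ (r, c) = (if k = r XOR c then 1 else 0)"
proof -
  have high_bits: "\<not> bit v i" if "v < 2 ^ m" "m \<le> i" for v :: nat and i
    using that by (metis bit_take_bit_iff linorder_not_le take_bit_nat_eq_self_iff)
  have "bit k i = bit (r XOR c) i" if "\<forall>i<m. bit k i = (bit r i \<noteq> bit c i)" for i
    using that assms xor_less_two_power[OF assms(1,2)] high_bits
    by (cases "i < m") (auto simp: bit_xor_iff)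
  then have "(\<forall>i<m. bit k i = (bit r i \<noteq> bit c i)) \<longleftrightarrow> k = r XOR c"
    by (auto simp: bit_eq_iff bit_xor_iff)
  then show ?thesis using assms(1,2) by (simp add: xstring_index_bits)
qed

lemma index_msum: "r < N \<Longrightarrow> c < N \<Longrightarrow> msum N f S $$ (r, c) = (\<Sum>k\<in>S. f k $$ (r, c))"
  by (simp add: msum_def)

lemma Mk_index:
  assumes "r < N" "c < N" "k \<noteq> 0"
  shows "Mk N a k $$ (r, c) = (if k = max r c - min r c then a k else 0)"
proof -
  have "Mk N a k $$ (r, c)
      = a k * (\<Sum>i\<in>{0..N - 1 - k}. (ketbra N i (i + k) + ketbra N (i + k) i) $$ (r, c))"
    using assms by (simp add: Mk_def msum_def)
  also have "\<dots> = a k * ((\<Sum>i\<in>{0..N - 1 - k}. if i = r then if c = r + k then 1 else 0 else 0)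
                        + (\<Sum>i\<in>{0..N - 1 - k}. if i = c then if r = c + k then 1 else 0 else 0))"
    unfolding sum.distrib[symmetric]
    by (intro arg_cong[where f = "(*) (a k)"] sum.cong) (use assms in \<open>auto simp: ketbra_def\<close>)
  also have "\<dots> = a k * ((if c = r + k then 1 else 0) + (if r = c + k then 1 else 0))"
    using assms by (simp add: sum.delta; arith)
  also have "\<dots> = (if k = max r c - min r c then a k else 0)"
    using assms(3) by (cases "r \<le> c") auto
  finally show ?thesis .
qed

lemma index_msum_Mk:
  assumes "r < N" "c < N" "finite S" "0 \<notin> S"
  shows "msum N (Mk N a) S $$ (r, c)
       = (if max r c - min r c \<in> S then a (max r c - min r c) else 0)"
proof -
  have "msum N (Mk N a) S $$ (r, c) = (\<Sum>k\<in>S. if k = max r c - min r c then a k else 0)"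
    unfolding index_msum[OF assms(1,2)]
  proof (rule sum.cong[OF refl])
    fix k assume "k \<in> S"
    then have "k \<noteq> 0" using assms(4) by metis
    then show "Mk N a k $$ (r, c) = (if k = max r c - min r c then a k else 0)"
      by (rule Mk_index[OF assms(1,2)])
  qed
  then show ?thesis using assms(3) by simp
qed

lemma index_msum_xstring:
  assumes "r < 2 ^ n" "c < 2 ^ n" "S \<subseteq> {..<2 ^ n}"
  shows "msum (2 ^ n) (\<lambda>k. xstring k n) S $$ (r, c) = (if r XOR c \<in> S then 1 else 0)"
proof -
  have "msum (2 ^ n) (\<lambda>k. xstring k n) S $$ (r, c) = (\<Sum>k\<in>S. if k = r XOR c then 1 else 0)"
    unfolding index_msum[OF assms(1,2)]
    using assms(3) by (intro sum.cong refl xstring_index[OF assms(1,2)]) blast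
  then show ?thesis using finite_subset[OF assms(3)] by simp
qed

lemma mod_two_power_Suc_eq_two_power_iff:
  "(k::nat) mod 2 ^ Suc s = 2 ^ s \<longleftrightarrow> k mod 2 ^ s = 0 \<and> bit k s"
proof -
  have split: "k mod 2 ^ Suc s = k mod 2 ^ s + 2 ^ s * (k div 2 ^ s mod 2)"
    unfolding power_Suc2 mod_mult2_eq by simp
  show ?thesis
  proof (cases "bit k s")
    case True
    then have "k div 2 ^ s mod 2 = 1" by (simp add: bit_iff_odd odd_iff_mod_2_eq_one)
    then show ?thesis using split True by simp
  next
    case False
    then have "k div 2 ^ s mod 2 = 0" by (simp add: bit_iff_odd even_iff_mod_2_eq_zero)
    then have "k mod 2 ^ Suc s < 2 ^ s" using split by simp
    then show ?thesis using False by simp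
  qed
qed

lemma xor_mod_two_power_eq_0_iff: "((r::nat) XOR c) mod 2 ^ s = 0 \<longleftrightarrow> r mod 2 ^ s = c mod 2 ^ s"
  by (simp flip: take_bit_eq_mod add: bit_eq_iff[of "take_bit s r"] bit_eq_iff[of _ 0]
      bit_take_bit_iff bit_xor_iff)

lemma bit_diff_if_mod_eq:
  assumes "(r::nat) \<le> c" "r mod 2 ^ s = c mod 2 ^ s"
  shows "bit (c - r) s \<longleftrightarrow> bit r s \<noteq> bit c s"
proof -
  have "c = 2 ^ s * (c div 2 ^ s) + c mod 2 ^ s" by simp
  moreover have "r = 2 ^ s * (r div 2 ^ s) + c mod 2 ^ s" by (simp flip: assms(2))
  ultimately have "c - r = 2 ^ s * (c div 2 ^ s - r div 2 ^ s)"
    unfolding diff_mult_distrib2 by linarith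
  then have "(c - r) div 2 ^ s = c div 2 ^ s - r div 2 ^ s" by simp
  moreover have "r div 2 ^ s \<le> c div 2 ^ s" using assms(1) by (rule div_le_mono)
  ultimately show ?thesis by (simp add: bit_iff_odd) blast
qed

lemma diff_mod_two_power_Suc_eq_two_power_iff:
  assumes "(r::nat) \<le> c"
  shows "(c - r) mod 2 ^ Suc s = 2 ^ s \<longleftrightarrow> (r XOR c) mod 2 ^ Suc s = 2 ^ s"
proof -
  have "(c - r) mod 2 ^ s = 0 \<longleftrightarrow> r mod 2 ^ s = c mod 2 ^ s"
    using mod_eq_dvd_iff_nat[OF assms, of "2 ^ s"] by (auto simp: dvd_eq_mod_eq_0)
  then have "(c - r) mod 2 ^ Suc s = 2 ^ s \<longleftrightarrow> r mod 2 ^ s = c mod 2 ^ s \<and> bit r s \<noteq> bit c s"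
    using bit_diff_if_mod_eq[OF assms, of s] mod_two_power_Suc_eq_two_power_iff[of "c - r" s] by auto
  moreover have "(r XOR c) mod 2 ^ Suc s = 2 ^ s \<longleftrightarrow> r mod 2 ^ s = c mod 2 ^ s \<and> bit r s \<noteq> bit c s"
    unfolding mod_two_power_Suc_eq_two_power_iff xor_mod_two_power_eq_0_iff bit_xor_iff by simp
  ultimately show ?thesis by simp
qed

lemma absdiff_mod_two_power_Suc_eq_two_power_iff:
  "(max r c - min r c) mod 2 ^ Suc s = 2 ^ s \<longleftrightarrow> ((r::nat) XOR c) mod 2 ^ Suc s = 2 ^ s"
  using diff_mod_two_power_Suc_eq_two_power_iff[of r c s] diff_mod_two_power_Suc_eq_two_power_iff[of c r s]
  by (cases "r \<le> c") (simp_all add: xor.commute)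

theorem theorem2:
  fixes n j :: nat and a :: "nat \<Rightarrow> complex"
  assumes "n \<ge> 2"
    and "1 \<le> j" and "j < n"
    and "\<forall>k\<in>{k. 1 \<le> k \<and> k < 2 ^ n \<and> k mod 2 ^ j = 2 ^ (j - 1)}. a k = a (2 ^ (j - 1))"
  shows "msum (2 ^ n) (Mk (2 ^ n) a) {k. 1 \<le> k \<and> k < 2 ^ n \<and> k mod 2 ^ j = 2 ^ (j - 1)}
       = a (2 ^ (j - 1)) \<cdot>\<^sub>m msum (2 ^ n) (\<lambda>k. xstring k n)
           {k. 1 \<le> k \<and> k < 2 ^ n \<and> k mod 2 ^ j = 2 ^ (j - 1)}"
    (is "msum _ _ ?C = ?R")
proof (rule eq_matI)
  fix r c assume "r < dim_row ?R" "c < dim_col ?R"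
  then have rc: "r < 2 ^ n" "c < 2 ^ n" by (simp_all add: msum_def)
  define d where "d = max r c - min r c"
  obtain s where j: "j = Suc s" using assms(2) by (cases j) auto
  have "d mod 2 ^ j = 2 ^ (j - 1) \<longleftrightarrow> (r XOR c) mod 2 ^ j = 2 ^ (j - 1)"
    unfolding d_def j using absdiff_mod_two_power_Suc_eq_two_power_iff by simp
  moreover have "d < 2 ^ n" "r XOR c < 2 ^ n"
    using rc xor_less_two_power[OF rc] by (auto simp: d_def)
  moreover have "1 \<le> x" if "x mod 2 ^ j = 2 ^ (j - 1)" for x :: nat
    using that by (cases "x = 0") auto
  ultimately have class_iff: "d \<in> ?C \<longleftrightarrow> r XOR c \<in> ?C"
    by blast
  have bounded: "?C \<subseteq> {..<2 ^ n}" by auto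
  have "msum (2 ^ n) (Mk (2 ^ n) a) ?C $$ (r, c) = (if d \<in> ?C then a d else 0)"
    unfolding d_def by (rule index_msum_Mk[OF rc finite_subset[OF bounded]]) auto
  also have "\<dots> = a (2 ^ (j - 1)) * (if r XOR c \<in> ?C then 1 else 0)"
    using class_iff assms(4) by simp
  also have "\<dots> = a (2 ^ (j - 1)) * msum (2 ^ n) (\<lambda>k. xstring k n) ?C $$ (r, c)"
    by (simp only: index_msum_xstring[OF rc bounded])
  also have "\<dots> = ?R $$ (r, c)"
    by (rule index_smult_mat(1)[symmetric]) (use rc in \<open>simp_all add: msum_def\<close>)
  finally show "msum (2 ^ n) (Mk (2 ^ n) a) ?C $$ (r, c) = ?R $$ (r, c)" .
qed (simp_all add: msum_def)

end
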